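(* Let $u,v$ be planar rooted trees with $|u|=m$ and $|v|=n$, and write $[p]_0=\{0,1,\dots,p\}$. (1) For every hash product $u\# v$ of $u$ with $v$ and every $k\in[m+n]_0$, there exists $(i,j)\in[m]_0\times[n]_0$ and hash products $u_{[1,i]}\# v_{[1,j]}$ and $u_{[i+1,m]}\# v_{[j+1,n]}$ such that $$(u\# v)_{[1,k]}\otimes(u\# v)_{[k+1,m+n]}=(u_{[1,i]}\# v_{[1,j]})\otimes(u_{[i+1,m]}\# v_{[j+1,n]}).$$ (2) Conversely, for every $(i,j)\in[m]_0\times[n]_0$ and all hash products $u_{[1,i]}\# v_{[1,j]}$ and $u_{[i+1,m]}\# v_{[j+1,n]}$, there is a hash product $u\# v$ such that $$(u_{[1,i]}\# v_{[1,j]})\otimes(u_{[i+1,m]}\# v_{[j+1,n]})=(u\# v)_{[1,i+j]}\otimes(u\# v)_{[i+j+1,m+n]}.$$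
   Context: A tree is a finite planar rooted tree; its degree is the number of non-root nodes; $\odot$ is the one-node tree. Nodes $N(t)$ are ordered by depth-first post-order (subtrees left to right recursively, then the node; root maximal); write $u_1<\dots<u_n$ for the non-root nodes of a tree of degree $n$. For a set $A$ of non-root nodes, $t_A$ is obtained by deleting non-root nodes outside $A$ (children of a deleted node attached in order to its parent in its place); $t_{[i,j]}=t_{\{u_h,\dots,u_k\}}$ if $i\le j$ and $[i,j]\cap[n]=[h,k]\ne\emptyset$, else $t_{[i,j]}=\odot$. A partition of a tree $v$ of degree $n\ge 1$ is an ordered tuple $(v_{[n_0+1,n_1]},\dots,v_{[n_{k-1}+1,n_k]})$ with $0=n_0<\dots<n_k=n$. For a partition $P=(v_1,\dots,v_k)$ of $v$ and a tree $t$, $I(P,t)$ is the set of maps $f$ from the blocks to $N(t)$ with $f(v_1)<\dots<f(v_k)$. The hash product $t\#_{P,f}v$ is obtained from $t$ by identifying the root of each $v_i$ with $f(v_i)$, the children of the root of $v_i$ becoming children of $f(v_i)$ placed to the right of its original children. "A hash product $t\# v$" means $t\#_{P,f}v$ for some such $(P,f)$; by convention the only hash product $t\#\odot$ is $t$ (and for $t=\odot$ the hash products $\odot\# v$ equal $v$). *)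

theory Defs
  imports Main
begin

datatype tree = Node "tree list"

definition odot :: tree where "odot = Node []"

fun children :: "tree \<Rightarrow> tree list" where
  "children (Node cs) = cs"

fun tsize :: "tree \<Rightarrow> nat" where
  "tsize (Node cs) = Suc (sum_list (map tsize cs))"

definition deg :: "tree \<Rightarrow> nat" where
  "deg t = tsize t - 1"

text \<open>Nodes are numbered 1,2,... in depth-first post-order; the root of t gets
  number deg t + 1, and the non-root nodes u_1 < ... < u_n get numbers 1..n.
  The offset k is the number of nodes preceding the (sub)tree in post-order.
  restr_t A k s deletes from the subtree s (at offset k) all nodes whose number is
  not in A, attaching the children of a deleted node in order at its place;
  it returns the resulting forest.\<close>
fun restr_t :: "nat set \<Rightarrow> nat \<Rightarrow> tree \<Rightarrow> tree list"
and restr_f :: "nat set \<Rightarrow> nat \<Rightarrow> tree list \<Rightarrow> tree list" where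
  "restr_t A k (Node cs) =
     (if k + tsize (Node cs) \<in> A then [Node (restr_f A k cs)] else restr_f A k cs)"
| "restr_f A k [] = []"
| "restr_f A k (c # cs) = restr_t A k c @ restr_f A (k + tsize c) cs"

fun restrict :: "tree \<Rightarrow> nat set \<Rightarrow> tree" where
  "restrict (Node cs) A = Node (restr_f A 0 cs)"

definition tint :: "tree \<Rightarrow> nat \<Rightarrow> nat \<Rightarrow> tree" where
  "tint t i j = (if i \<le> j \<and> {i..j} \<inter> {1..deg t} \<noteq> {}
                 then restrict t ({i..j} \<inter> {1..deg t}) else odot)"

text \<open>A partition of v (degree n \<ge> 1) is given by its cut list [n_1,...,n_k]
  with 0 = n_0 < n_1 < ... < n_k = n.\<close>
definition is_cuts :: "nat \<Rightarrow> nat list \<Rightarrow> bool" where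
  "is_cuts n ns \<longleftrightarrow> ns \<noteq> [] \<and> sorted_wrt (<) (0 # ns) \<and> last ns = n"

definition blocks :: "tree \<Rightarrow> nat list \<Rightarrow> tree list" where
  "blocks v ns = map (\<lambda>l. tint v ((0 # ns) ! l + 1) (ns ! l)) [0..<length ns]"

text \<open>A map f from the k blocks to N(t) with f(v_1) < ... < f(v_k), given as the list
  of post-order numbers of the images (nodes of t are numbered 1..deg t + 1).\<close>
definition is_place :: "tree \<Rightarrow> nat \<Rightarrow> nat list \<Rightarrow> bool" where
  "is_place t k ps \<longleftrightarrow> length ps = k \<and> sorted_wrt (<) ps \<and>
     (\<forall>p\<in>set ps. 1 \<le> p \<and> p \<le> deg t + 1)"

text \<open>Grafting: g p is the forest appended (to the right of the existing children)
  as new children of the node of t numbered p (numbers refer to the original t).\<close>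
fun graft_t :: "(nat \<Rightarrow> tree list) \<Rightarrow> nat \<Rightarrow> tree \<Rightarrow> tree"
and graft_f :: "(nat \<Rightarrow> tree list) \<Rightarrow> nat \<Rightarrow> tree list \<Rightarrow> tree list" where
  "graft_t g k (Node cs) = Node (graft_f g k cs @ g (k + tsize (Node cs)))"
| "graft_f g k [] = []"
| "graft_f g k (c # cs) = graft_t g k c # graft_f g (k + tsize c) cs"

definition hash_prod :: "tree \<Rightarrow> tree \<Rightarrow> nat list \<Rightarrow> nat list \<Rightarrow> tree" where
  "hash_prod t v ns ps =
     graft_t (\<lambda>p. case map_of (zip ps (blocks v ns)) p of None \<Rightarrow> [] | Some b \<Rightarrow> children b) 0 t"

text \<open>The set of all hash products t # v (with the convention t # odot = t).\<close>
definition hashes :: "tree \<Rightarrow> tree \<Rightarrow> tree set" where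
  "hashes t v = (if deg v = 0 then {t} else
     {hash_prod t v ns ps | ns ps. is_cuts (deg v) ns \<and> is_place t (length ns) ps})"

end

theory Submission
  imports Defs
begin

(* In post-order, a hash product w of u with v lists the nodes of u, each immediately preceded by
   the block of v grafted onto it, and the blocks are consecutive intervals of v.  A hash product
   is therefore the same as a monotone count function C, where C p is the number of nodes of v
   carried by the nodes of u numbered at most p.  Cutting w after its k-th node cuts u after some
   node i and v after node j = k - i with C i \<le> j \<le> C (i + 1); the two pieces are hash
   products of the corresponding halves of u and v, for the truncated and for the shifted count
   function.  Conversely, count functions for the two halves concatenate to one for u and v. *)

section \<open>Post-order prefixes and suffixes of forests\<close>

abbreviation fsize :: "tree list \<Rightarrow> nat" where
  "fsize F \<equiv> sum_list (map tsize F)"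

lemma deg_Node [simp]: "deg (Node F) = fsize F"
  by (simp add: deg_def)

lemma Node_children [simp]: "Node (children t) = t"
  by (cases t) simp

lemma deg_eq_fsize_children: "deg t = fsize (children t)"
  by (cases t) simp

lemma tsize_eq_Suc_deg: "tsize t = Suc (deg t)"
  by (cases t) (simp add: deg_def)

lemma forest_induct [case_names Nil Node]:
  assumes "P []" and "\<And>ds cs. P ds \<Longrightarrow> P cs \<Longrightarrow> P (Node ds # cs)"
  shows "P F"
proof (induction "fsize F" arbitrary: F rule: less_induct)
  case less
  show ?case
  proof (cases F)
    case Nil
    then show ?thesis using assms(1) by simp
  next
    case (Cons c cs)
    obtain ds where c: "c = Node ds" by (cases c)
    have "P ds" "P cs" using less Cons c by simp_all
    then show ?thesis using assms(2) Cons c by simp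
  qed
qed

(* ftake r F keeps the first r nodes of F in post-order and fdrop r F the others, in the sense of
   restr_f (lemma restr_f_eq_fdrop_ftake). *)
fun ftake :: "nat \<Rightarrow> tree list \<Rightarrow> tree list" where
  "ftake r [] = []"
| "ftake r (Node ds # cs) =
     (if tsize (Node ds) \<le> r then Node ds # ftake (r - tsize (Node ds)) cs else ftake r ds)"

fun fdrop :: "nat \<Rightarrow> tree list \<Rightarrow> tree list" where
  "fdrop r [] = []"
| "fdrop r (Node ds # cs) =
     (if tsize (Node ds) \<le> r then fdrop (r - tsize (Node ds)) cs else Node (fdrop r ds) # cs)"

declare ftake.simps(2) [simp del] fdrop.simps(2) [simp del]

lemma fsize_ftake: "fsize (ftake r F) = min r (fsize F)"
  by (induction F arbitrary: r rule: forest_induct) (auto simp: ftake.simps(2))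

lemma fsize_fdrop: "fsize (fdrop r F) = fsize F - r"
  by (induction F arbitrary: r rule: forest_induct) (auto simp: fdrop.simps(2))

lemma ftake_all: "fsize F \<le> r \<Longrightarrow> ftake r F = F"
  by (induction F arbitrary: r rule: forest_induct) (auto simp: ftake.simps(2))

lemma fdrop_all: "fsize F \<le> r \<Longrightarrow> fdrop r F = []"
  by (induction F arbitrary: r rule: forest_induct) (auto simp: fdrop.simps(2) fsize_fdrop)

lemma ftake_0 [simp]: "ftake 0 F = []"
  by (induction F rule: forest_induct) (auto simp: ftake.simps(2))

lemma fdrop_0 [simp]: "fdrop 0 F = F"
  by (induction F rule: forest_induct) (auto simp: fdrop.simps(2) fsize_fdrop add.commute)

lemma ftake_append:
  "ftake r (A @ B) = (if r \<le> fsize A then ftake r A else A @ ftake (r - fsize A) B)"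
  by (induction A arbitrary: r rule: forest_induct) (auto simp: ftake.simps(2) ftake_all)

lemma fdrop_append: "fdrop r (A @ B) = fdrop r A @ fdrop (r - fsize A) B"
  by (induction A arbitrary: r rule: forest_induct) (auto simp: fdrop.simps(2) fsize_fdrop)

lemma ftake_ftake: "ftake a (ftake b F) = ftake (min a b) F"
  by (induction F arbitrary: a b rule: forest_induct) (auto simp: ftake.simps(2) min_def)

lemma fdrop_fdrop: "fdrop a (fdrop b F) = fdrop (b + a) F"
  by (induction F arbitrary: a b rule: forest_induct)
     (auto simp: fdrop.simps(2) fsize_fdrop add.commute)

lemma ftake_fdrop: "ftake r (fdrop a F) = fdrop a (ftake (a + r) F)"
  by (induction F arbitrary: a r rule: forest_induct)
     (auto simp: fdrop.simps(2) ftake.simps(2) fsize_fdrop add.commute)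

lemma ftake_Cons_add: "ftake (tsize c + r) (c # cs) = c # ftake r cs"
  by (cases c) (simp add: ftake.simps(2))

lemma fdrop_Cons_add: "fdrop (tsize c + r) (c # cs) = fdrop r cs"
  by (cases c) (simp add: fdrop.simps(2))

lemma ftake_Node_less: "r < tsize (Node ds) \<Longrightarrow> ftake r (Node ds # cs) = ftake r ds"
  by (simp add: ftake.simps(2))

lemma fdrop_Node_less: "r < tsize (Node ds) \<Longrightarrow> fdrop r (Node ds # cs) = Node (fdrop r ds) # cs"
  by (simp add: fdrop.simps(2))

lemma restr_f_eq_fdrop_ftake:
  "(\<forall>x. k < x \<and> x \<le> k + fsize F \<longrightarrow> (x \<in> A \<longleftrightarrow> k + a < x \<and> x \<le> k + b))
   \<Longrightarrow> restr_f A k F = fdrop a (ftake b F)"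
proof (induction F arbitrary: k a b rule: forest_induct)
  case Nil
  then show ?case by simp
next
  case (Node ds cs)
  define T where "T = tsize (Node ds)"
  have T: "T = Suc (fsize ds)" by (simp add: T_def)
  have ds: "restr_f A k ds = fdrop a (ftake b ds)"
    using Node.prems by (intro Node.IH(1)) (auto simp: T)
  have cs: "restr_f A (k + T) cs = fdrop (a - T) (ftake (b - T) cs)"
    using Node.prems by (intro Node.IH(2)) (auto simp: T)
  have root: "k + T \<in> A \<longleftrightarrow> a < T \<and> T \<le> b"
    using Node.prems[rule_format, of "k + T"] by (auto simp: T)
  have "restr_f A k (Node ds # cs) =
      (if k + T \<in> A then [Node (fdrop a (ftake b ds))] else fdrop a (ftake b ds))
      @ fdrop (a - T) (ftake (b - T) cs)"
    using ds cs by (simp add: T_def)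
  also have "\<dots> = fdrop a (ftake b (Node ds # cs))"
  proof (cases "T \<le> b")
    case True
    then have "ftake b ds = ds" by (intro ftake_all) (simp add: T)
    then show ?thesis using True root
      by (cases "T \<le> a") (simp_all add: ftake.simps(2) fdrop.simps(2) T_def[symmetric] fdrop_all T)
  next
    case False
    then show ?thesis using root by (simp add: ftake.simps(2) T_def[symmetric] T)
  qed
  finally show ?case .
qed

lemma tint_eq_fdrop_ftake:
  assumes "1 \<le> a" "b \<le> deg t"
  shows "tint t a b = Node (fdrop (a - 1) (ftake b (children t)))"
proof (cases t)
  case (Node cs)
  show ?thesis
  proof (cases "a \<le> b")
    case True
    then have ne: "{a..b} \<inter> {1..deg t} \<noteq> {}" using assms by auto
    have "restr_f ({a..b} \<inter> {1..deg t}) 0 cs = fdrop (a - 1) (ftake b cs)"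
      by (rule restr_f_eq_fdrop_ftake) (use assms Node in auto)
    then show ?thesis using True ne Node by (simp add: tint_def)
  next
    case False
    then have "fdrop (a - 1) (ftake b cs) = []" by (intro fdrop_all) (simp add: fsize_ftake)
    then show ?thesis using False Node by (simp add: tint_def odot_def)
  qed
qed

lemma tint_prefix: "i \<le> fsize U \<Longrightarrow> tint (Node U) 1 i = Node (ftake i U)"
  using tint_eq_fdrop_ftake[of 1 i "Node U"] by simp

lemma tint_suffix: "i \<le> fsize U \<Longrightarrow> tint (Node U) (i + 1) (fsize U) = Node (fdrop i U)"
  using tint_eq_fdrop_ftake[of "i + 1" "fsize U" "Node U"] by (simp add: ftake_all)

section \<open>Grafting\<close>

definition graft_count :: "(nat \<Rightarrow> tree list) \<Rightarrow> nat \<Rightarrow> nat \<Rightarrow> nat" where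
  "graft_count g k n = (\<Sum>p = Suc k..k + n. fsize (g p))"

lemma graft_count_0 [simp]: "graft_count g k 0 = 0"
  by (simp add: graft_count_def)

lemma graft_count_Suc [simp]:
  "graft_count g k (Suc n) = graft_count g k n + fsize (g (k + Suc n))"
  by (simp add: graft_count_def)

lemma graft_count_add: "graft_count g k (a + b) = graft_count g k a + graft_count g (k + a) b"
  by (induction b) (auto simp: add.assoc)

lemma graft_count_mono: "a \<le> b \<Longrightarrow> graft_count g k a \<le> graft_count g k b"
  using graft_count_add[of g k a "b - a"] by simp

lemma graft_count_le:
  "i < n \<Longrightarrow> s \<le> fsize (g (k + i + 1)) \<Longrightarrow> graft_count g k i + s \<le> graft_count g k n"
  using graft_count_mono[of "Suc i" n g k] by simp

lemma tsize_graft_t: "tsize (graft_t g k t) = tsize t + graft_count g k (tsize t)"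
  and fsize_graft_f: "fsize (graft_f g k F) = fsize F + graft_count g k (fsize F)"
  by (induction g k t and g k F rule: graft_t_graft_f.induct) (auto simp: graft_count_add)

lemma graft_t_cong:
    "(\<forall>p. k < p \<and> p \<le> k + tsize t \<longrightarrow> g p = g' p) \<Longrightarrow> graft_t g k t = graft_t g' k t"
  and graft_f_cong:
    "(\<forall>p. k < p \<and> p \<le> k + fsize F \<longrightarrow> g p = g' p) \<Longrightarrow> graft_f g k F = graft_f g' k F"
  by (induction g k t and g k F rule: graft_t_graft_f.induct) auto

lemma graft_t_id: "(\<forall>p. k < p \<and> p \<le> k + tsize t \<longrightarrow> g p = []) \<Longrightarrow> graft_t g k t = t"
  and graft_f_id: "(\<forall>p. k < p \<and> p \<le> k + fsize F \<longrightarrow> g p = []) \<Longrightarrow> graft_f g k F = F"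
  by (induction g k t and g k F rule: graft_t_graft_f.induct) auto

lemma graft_t_shift: "graft_t g (k + d) t = graft_t (\<lambda>p. g (p + d)) k t"
  and graft_f_shift: "graft_f g (k + d) F = graft_f (\<lambda>p. g (p + d)) k F"
  by (induction g k t and g k F rule: graft_t_graft_f.induct) (auto simp: ac_simps)

(* Position i + graft_count g k i + s lies s nodes into the forest grafted at node k + i + 1. *)
lemma ftake_graft_f:
  "i < fsize F \<Longrightarrow> s \<le> fsize (g (k + i + 1)) \<Longrightarrow>
   ftake (i + graft_count g k i + s) (graft_f g k F) = graft_f g k (ftake i F) @ ftake s (g (k + i + 1))"
proof (induction F arbitrary: k i rule: forest_induct)
  case Nil
  then show ?case by simp
next
  case (Node ds cs)
  define T where "T = tsize (Node ds)"
  define X where "X = graft_f g k ds @ g (k + T)"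
  have X: "tsize (Node X) = T + graft_count g k T"
    by (simp add: X_def fsize_graft_f T_def)
  have graft: "graft_f g k (Node ds # cs) = Node X # graft_f g (k + T) cs"
    by (simp add: X_def T_def)
  show ?case
  proof (cases "T \<le> i")
    case True
    have r: "i + graft_count g k i + s =
        tsize (Node X) + ((i - T) + graft_count g (k + T) (i - T) + s)"
      using graft_count_add[of g k T "i - T"] True X by simp
    have "ftake (i - T + graft_count g (k + T) (i - T) + s) (graft_f g (k + T) cs)
       = graft_f g (k + T) (ftake (i - T) cs) @ ftake s (g (k + T + (i - T) + 1))"
      using Node.prems True by (intro Node.IH(2)) (auto simp: T_def)
    moreover have "ftake i (Node ds # cs) = Node ds # ftake (i - T) cs"
      using True ftake_Cons_add[of "Node ds" "i - T" cs] by (simp add: T_def)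
    ultimately show ?thesis using True unfolding graft r ftake_Cons_add
      by (simp add: T_def X_def)
  next
    case False
    have "i + graft_count g k i + s < tsize (Node X)"
      using graft_count_le[of i T s g k] Node.prems(2) False X by simp
    then have lhs: "ftake (i + graft_count g k i + s) (graft_f g k (Node ds # cs)) =
        ftake (i + graft_count g k i + s) X"
      unfolding graft by (rule ftake_Node_less)
    have rhs: "ftake i (Node ds # cs) = ftake i ds"
      using False by (simp add: ftake.simps(2) T_def)
    show ?thesis
    proof (cases "i < fsize ds")
      case True
      have "i + graft_count g k i + s \<le> fsize (graft_f g k ds)"
        using graft_count_le[of i "fsize ds" s g k] True Node.prems(2) by (simp add: fsize_graft_f)
      then show ?thesis
        unfolding lhs rhs X_def ftake_append using Node.IH(1)[OF True Node.prems(2)] by simp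
    next
      case False
      then have i: "i = fsize ds" using \<open>\<not> T \<le> i\<close> T_def by simp
      then show ?thesis unfolding lhs rhs X_def ftake_append
        by (simp add: fsize_graft_f T_def ftake_all)
    qed
  qed
qed

lemma fdrop_graft_f:
  "i < fsize F \<Longrightarrow> s \<le> fsize (g (k + i + 1)) \<Longrightarrow>
   fdrop (i + graft_count g k i + s) (graft_f g k F) =
     graft_f (g(k + i + 1 := fdrop s (g (k + i + 1)))) (k + i) (fdrop i F)"
proof (induction F arbitrary: k i rule: forest_induct)
  case Nil
  then show ?case by simp
next
  case (Node ds cs)
  define T where "T = tsize (Node ds)"
  define X where "X = graft_f g k ds @ g (k + T)"
  define g' where "g' = g(k + i + 1 := fdrop s (g (k + i + 1)))"
  have X: "tsize (Node X) = T + graft_count g k T"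
    by (simp add: X_def fsize_graft_f T_def)
  have graft: "graft_f g k (Node ds # cs) = Node X # graft_f g (k + T) cs"
    by (simp add: X_def T_def)
  show ?case
  proof (cases "T \<le> i")
    case True
    have r: "i + graft_count g k i + s =
        tsize (Node X) + ((i - T) + graft_count g (k + T) (i - T) + s)"
      using graft_count_add[of g k T "i - T"] True X by simp
    have kT: "k + T + (i - T) = k + i" using True by simp
    have "fdrop (i - T + graft_count g (k + T) (i - T) + s) (graft_f g (k + T) cs)
       = graft_f g' (k + i) (fdrop (i - T) cs)"
      using Node.IH(2)[of "i - T" "k + T"] Node.prems True unfolding kT g'_def
      by (simp add: T_def fun_upd_def)
    moreover have "fdrop i (Node ds # cs) = fdrop (i - T) cs"
      using True fdrop_Cons_add[of "Node ds" "i - T" cs] by (simp add: T_def)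
    ultimately show ?thesis unfolding graft r fdrop_Cons_add g'_def by (simp add: fun_upd_def)
  next
    case False
    have "i + graft_count g k i + s < tsize (Node X)"
      using graft_count_le[of i T s g k] Node.prems(2) False X by simp
    then have lhs: "fdrop (i + graft_count g k i + s) (graft_f g k (Node ds # cs)) =
        Node (fdrop (i + graft_count g k i + s) X) # graft_f g (k + T) cs"
      unfolding graft by (rule fdrop_Node_less)
    have drop: "fdrop i (Node ds # cs) = Node (fdrop i ds) # cs"
      using False by (simp add: fdrop.simps(2) T_def)
    have T: "Suc (k + i + fsize (fdrop i ds)) = k + T"
      using False by (simp add: fsize_fdrop T_def)
    have cs: "graft_f g' (k + T) cs = graft_f g (k + T) cs"
      by (rule graft_f_cong) (use False in \<open>auto simp: g'_def\<close>)
    have "graft_f g' (k + i) (Node (fdrop i ds) # cs) =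
        Node (graft_f g' (k + i) (fdrop i ds) @ g' (Suc (k + i + fsize (fdrop i ds))))
        # graft_f g' (Suc (k + i + fsize (fdrop i ds))) cs"
      by simp
    then have rhs: "graft_f g' (k + i) (fdrop i (Node ds # cs)) =
        Node (graft_f g' (k + i) (fdrop i ds) @ g' (k + T)) # graft_f g (k + T) cs"
      unfolding drop T cs .
    show ?thesis
    proof (cases "i < fsize ds")
      case True
      have "i + graft_count g k i + s \<le> fsize (graft_f g k ds)"
        using graft_count_le[of i "fsize ds" s g k] True Node.prems(2) by (simp add: fsize_graft_f)
      moreover have "T \<noteq> Suc i" using True by (simp add: T_def)
      ultimately show ?thesis
        unfolding lhs rhs[unfolded g'_def] X_def fdrop_append
        using Node.IH(1)[OF True Node.prems(2)] by (simp add: fun_upd_def)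
    next
      case False
      then have i: "i = fsize ds" using \<open>\<not> T \<le> i\<close> T_def by simp
      have "fdrop i ds = []" "fdrop (i + graft_count g k i + s) (graft_f g k ds) = []"
        by (simp_all add: fdrop_all fsize_graft_f i)
      then show ?thesis unfolding lhs rhs[unfolded g'_def] X_def fdrop_append
        by (simp add: fsize_graft_f i T_def)
    qed
  qed
qed

lemma length_filter_sorted_nth:
  "sorted_wrt (<) (xs :: nat list) \<Longrightarrow> l < length xs \<Longrightarrow>
   length (filter (\<lambda>x. x < xs ! l) xs) = l \<and> length (filter (\<lambda>x. x \<le> xs ! l) xs) = Suc l"
proof (induction xs arbitrary: l)
  case (Cons x xs)
  show ?case
  proof (cases l)
    case 0
    then have "filter (\<lambda>y. y \<le> x) xs = []" "filter (\<lambda>y. y < x) xs = []"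
      using Cons.prems by (auto simp: filter_empty_conv)
    then show ?thesis using 0 by simp
  next
    case (Suc l')
    then have "x < xs ! l'" using Cons.prems by simp
    then show ?thesis using Cons Suc by (auto simp: less_imp_le)
  qed
qed simp

lemma sorted_wrt_less_le_last: "sorted_wrt (<) (xs :: nat list) \<Longrightarrow> x \<in> set xs \<Longrightarrow> x \<le> last xs"
proof (induction xs)
  case (Cons a xs)
  then show ?case
    using last_in_set[of xs] by (cases "xs = []") (auto simp: less_imp_le)
qed simp

section \<open>Hash products as count functions\<close>

(* Node p of t (post-order number) receives the children of the block of v formed by the nodes
   C (p - 1) + 1, ..., C p of v. *)
definition chunk :: "(nat \<Rightarrow> nat) \<Rightarrow> tree list \<Rightarrow> nat \<Rightarrow> tree list" where
  "chunk C V p = fdrop (C (p - 1)) (ftake (C p) V)"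

definition valid_counts :: "nat \<Rightarrow> nat \<Rightarrow> (nat \<Rightarrow> nat) \<Rightarrow> bool" where
  "valid_counts m n C \<longleftrightarrow> C 0 = 0 \<and> C (Suc m) = n \<and> (\<forall>p\<le>m. C p \<le> C (Suc p))"

definition graft_chunks :: "(nat \<Rightarrow> nat) \<Rightarrow> tree list \<Rightarrow> tree \<Rightarrow> tree" where
  "graft_chunks C V t = graft_t (chunk C V) 0 t"

lemma valid_counts_mono:
  assumes "valid_counts m n C" "p \<le> q" "q \<le> Suc m"
  shows "C p \<le> C q"
  using assms(2,3)
proof (induction q)
  case (Suc q)
  then show ?case
    using assms(1) by (cases "p = Suc q") (auto simp: valid_counts_def intro: order_trans)
qed simp

lemma valid_counts_le: "valid_counts m n C \<Longrightarrow> p \<le> Suc m \<Longrightarrow> C p \<le> n"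
  using valid_counts_mono[of m n C p "Suc m"] by (simp add: valid_counts_def)

lemma fsize_chunk: "C (p - 1) \<le> C p \<Longrightarrow> C p \<le> fsize V \<Longrightarrow> fsize (chunk C V p) = C p - C (p - 1)"
  by (simp add: chunk_def fsize_fdrop fsize_ftake)

lemma graft_count_chunk:
  assumes "valid_counts m n C" "n \<le> fsize V" "q \<le> Suc m"
  shows "graft_count (chunk C V) 0 q = C q"
  using assms(3)
proof (induction q)
  case 0
  then show ?case using assms(1) by (simp add: valid_counts_def)
next
  case (Suc q)
  have "C q \<le> C (Suc q)" "C (Suc q) \<le> fsize V"
    using valid_counts_mono[OF assms(1), of q "Suc q"] valid_counts_le[OF assms(1) Suc.prems]
      Suc.prems assms(2) by auto
  then show ?case using Suc fsize_chunk[of C "Suc q" V] by simp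
qed

lemma graft_chunks_cong:
  "tsize t = Suc m \<Longrightarrow> (\<forall>p \<le> Suc m. C p = C' p) \<Longrightarrow> graft_chunks C V t = graft_chunks C' V t"
  unfolding graft_chunks_def by (rule graft_t_cong) (auto simp: chunk_def)

(* The count function of the hash product with cut list ns and places ps. *)
definition cut_counts :: "nat list \<Rightarrow> nat list \<Rightarrow> nat \<Rightarrow> nat" where
  "cut_counts ns ps p = (0 # ns) ! length (filter (\<lambda>x. x \<le> p) ps)"

lemma valid_counts_cut_counts:
  assumes cuts: "is_cuts n ns" and place: "is_place t (length ns) ps"
  shows "valid_counts (deg t) n (cut_counts ns ps)"
proof -
  have ne: "ns \<noteq> []" and sorted: "sorted (0 # ns)" and last: "last ns = n"
    using cuts strict_sorted_iff by (auto simp: is_cuts_def)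
  have len: "length ps = length ns" and range: "\<forall>p\<in>set ps. 1 \<le> p \<and> p \<le> deg t + 1"
    using place by (auto simp: is_place_def)
  have "cut_counts ns ps p \<le> cut_counts ns ps q" if "p \<le> q" for p q
  proof -
    have "filter (\<lambda>x. x \<le> p) ps = filter (\<lambda>x. x \<le> p) (filter (\<lambda>x. x \<le> q) ps)"
      using that by (auto simp: filter_filter intro: filter_cong)
    then have "length (filter (\<lambda>x. x \<le> p) ps) \<le> length (filter (\<lambda>x. x \<le> q) ps)"
      by (metis length_filter_le)
    moreover have "length (filter (\<lambda>x. x \<le> q) ps) < length (0 # ns)"
      using length_filter_le[of _ ps] len by (simp add: le_imp_less_Suc)
    ultimately show ?thesis unfolding cut_counts_def by (intro sorted_nth_mono[OF sorted]) auto
  qed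
  moreover have "filter (\<lambda>x. x \<le> 0) ps = []" using range by (auto intro!: filter_False)
  moreover have "filter (\<lambda>x. x \<le> Suc (deg t)) ps = ps" using range by (auto intro!: filter_True)
  moreover have "(0 # ns) ! length ns = n" using ne last by (cases ns rule: rev_cases) auto
  ultimately show ?thesis by (simp add: valid_counts_def cut_counts_def len)
qed

lemma hash_prod_eq_graft_chunks:
  assumes cuts: "is_cuts (deg v) ns" and place: "is_place t (length ns) ps"
  shows "hash_prod t v ns ps = graft_chunks (cut_counts ns ps) (children v) t"
  unfolding hash_prod_def graft_chunks_def
proof (rule graft_t_cong, intro allI impI)
  fix p
  have sorted: "sorted_wrt (<) (0 # ns)" and last: "last ns = deg v"
    using cuts by (auto simp: is_cuts_def)
  have len: "length ps = length ns" and sorted_ps: "sorted_wrt (<) ps"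
    and range: "\<forall>p\<in>set ps. 1 \<le> p \<and> p \<le> deg t + 1"
    using place by (auto simp: is_place_def)
  show "(case map_of (zip ps (blocks v ns)) p of None \<Rightarrow> [] | Some b \<Rightarrow> children b) =
      chunk (cut_counts ns ps) (children v) p"
  proof (cases "p \<in> set ps")
    case True
    then obtain l where l: "l < length ps" "ps ! l = p" by (auto simp: in_set_conv_nth)
    have "distinct ps" "length (blocks v ns) = length ps"
      using sorted_ps len by (auto simp: strict_sorted_iff blocks_def)
    then have "map_of (zip ps (blocks v ns)) p = Some (blocks v ns ! l)"
      using map_of_zip_nth[of ps "blocks v ns" l] l by simp
    moreover have "ns ! l \<le> deg v"
      using sorted_wrt_less_le_last[of ns "ns ! l"] sorted l len last by simp
    then have "blocks v ns ! l = Node (fdrop ((0 # ns) ! l) (ftake (ns ! l) (children v)))"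
      using l len tint_eq_fdrop_ftake[of "(0 # ns) ! l + 1" "ns ! l" v] by (simp add: blocks_def)
    moreover have "filter (\<lambda>x. x \<le> p - 1) ps = filter (\<lambda>x. x < p) ps"
      using range True by (intro filter_cong) auto
    ultimately show ?thesis
      using length_filter_sorted_nth[OF sorted_ps l(1)] l by (simp add: chunk_def cut_counts_def)
  next
    case False
    then have "map_of (zip ps (blocks v ns)) p = None"
      by (auto simp: map_of_eq_None_iff dest: set_zip_leftD)
    moreover have "filter (\<lambda>x. x \<le> p - 1) ps = filter (\<lambda>x. x \<le> p) ps"
    proof (rule filter_cong)
      show "x \<le> p - 1 \<longleftrightarrow> x \<le> p" if "x \<in> set ps" for x
        using that False by (cases "x = p") auto
    qed simp
    then have "chunk (cut_counts ns ps) (children v) p = []"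
      by (simp add: chunk_def cut_counts_def fdrop_all fsize_ftake)
    ultimately show ?thesis by simp
  qed
qed

definition jumps :: "(nat \<Rightarrow> nat) \<Rightarrow> nat \<Rightarrow> nat list" where
  "jumps C q = filter (\<lambda>p. C (p - 1) < C p) [1..<Suc q]"

lemma jumps_values:
  assumes "valid_counts m n C" "q \<le> Suc m"
  shows "last (0 # map C (jumps C q)) = C q \<and> sorted_wrt (<) (0 # map C (jumps C q))"
  using assms(2)
proof (induction q)
  case 0
  then show ?case using assms(1) by (simp add: jumps_def valid_counts_def)
next
  case (Suc q)
  then have IH: "last (0 # map C (jumps C q)) = C q" "sorted_wrt (<) (0 # map C (jumps C q))"
    by auto
  have "C q \<le> C (Suc q)" using valid_counts_mono[OF assms(1), of q "Suc q"] Suc.prems by simp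
  moreover have "jumps C (Suc q) = jumps C q @ (if C q < C (Suc q) then [Suc q] else [])"
    by (simp add: jumps_def)
  moreover have "\<forall>x\<in>set (0 # map C (jumps C q)). x \<le> C q"
    using sorted_wrt_less_le_last[OF IH(2)] IH(1) by fastforce
  ultimately show ?case using IH by (auto simp: sorted_wrt_append)
qed

lemma cut_counts_jumps:
  assumes "valid_counts m n C" "p \<le> Suc m"
  shows "cut_counts (map C (jumps C (Suc m))) (jumps C (Suc m)) p = C p"
proof -
  define R where "R = filter (\<lambda>q. C (q - 1) < C q) [Suc p..<Suc (Suc m)]"
  have "[1..<Suc (Suc m)] = [1..<Suc p] @ [Suc p..<Suc (Suc m)]"
    using assms(2) upt_add_eq_append[of 1 "Suc p" "Suc (Suc m) - Suc p"] by simp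
  then have jumps_split: "jumps C (Suc m) = jumps C p @ R" by (simp add: jumps_def R_def)
  have "filter (\<lambda>x. x \<le> p) (jumps C p) = jumps C p"
    unfolding jumps_def by (rule filter_True) auto
  moreover have "filter (\<lambda>x. x \<le> p) R = []"
    unfolding R_def by (rule filter_False) auto
  ultimately have "cut_counts (map C (jumps C (Suc m))) (jumps C (Suc m)) p
      = last (0 # map C (jumps C p))"
    by (simp add: cut_counts_def jumps_split nth_append last_conv_nth)
  then show ?thesis using jumps_values[OF assms] by simp
qed

lemma graft_chunks_in_hashes:
  assumes valid: "valid_counts (deg t) (deg v) C"
  shows "graft_chunks C (children v) t \<in> hashes t v"
proof (cases "deg v = 0")
  case True
  have "graft_chunks C (children v) t = t"
    unfolding graft_chunks_def
  proof (rule graft_t_id, intro allI impI)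
    fix p assume "0 < p \<and> p \<le> 0 + tsize t"
    then have "C p = 0" "C (p - 1) = 0"
      using valid_counts_le[OF valid, of p] valid_counts_le[OF valid, of "p - 1"] True
      by (auto simp: tsize_eq_Suc_deg)
    then show "chunk C (children v) p = []" by (simp add: chunk_def)
  qed
  then show ?thesis using True by (simp add: hashes_def)
next
  case False
  define ps where "ps = jumps C (Suc (deg t))"
  have ps_values: "last (0 # map C ps) = deg v" "sorted_wrt (<) (0 # map C ps)"
    using jumps_values[OF valid, of "Suc (deg t)"] valid by (simp_all add: ps_def valid_counts_def)
  then have "ps \<noteq> []" using False by auto
  then have cuts: "is_cuts (deg v) (map C ps)" using ps_values by (simp add: is_cuts_def)
  have "sorted_wrt (<) ps" unfolding ps_def jumps_def by (intro sorted_wrt_filter sorted_wrt_upt)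
  then have place: "is_place t (length (map C ps)) ps"
    by (auto simp: is_place_def ps_def jumps_def)
  have "hash_prod t v (map C ps) ps = graft_chunks C (children v) t"
    unfolding hash_prod_eq_graft_chunks[OF cuts place]
    by (rule graft_chunks_cong[OF tsize_eq_Suc_deg]) (simp add: cut_counts_jumps[OF valid] ps_def)
  then show ?thesis using False cuts place unfolding hashes_def by (simp, metis)
qed

lemma hashes_eq_graft_chunks:
  "hashes t v = {graft_chunks C (children v) t | C. valid_counts (deg t) (deg v) C}"
proof (intro equalityI subsetI)
  fix w assume w: "w \<in> hashes t v"
  show "w \<in> {graft_chunks C (children v) t | C. valid_counts (deg t) (deg v) C}"
  proof (cases "deg v = 0")
    case True
    then have "w = graft_chunks (\<lambda>_. 0) (children v) t"
      using w by (simp add: hashes_def graft_chunks_def chunk_def graft_t_id)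
    moreover have "valid_counts (deg t) (deg v) (\<lambda>_. 0)" using True by (simp add: valid_counts_def)
    ultimately show ?thesis by blast
  next
    case False
    then show ?thesis
      using w hash_prod_eq_graft_chunks valid_counts_cut_counts by (auto simp: hashes_def)
  qed
qed (auto intro: graft_chunks_in_hashes)

section \<open>Cutting a hash product\<close>

definition counts_prefix :: "nat \<Rightarrow> nat \<Rightarrow> (nat \<Rightarrow> nat) \<Rightarrow> nat \<Rightarrow> nat" where
  "counts_prefix i j C p = (if p \<le> i then C p else j)"

definition counts_suffix :: "nat \<Rightarrow> nat \<Rightarrow> (nat \<Rightarrow> nat) \<Rightarrow> nat \<Rightarrow> nat" where
  "counts_suffix i j C p = (if p = 0 then 0 else C (p + i) - j)"

definition counts_join :: "nat \<Rightarrow> nat \<Rightarrow> (nat \<Rightarrow> nat) \<Rightarrow> (nat \<Rightarrow> nat) \<Rightarrow> nat \<Rightarrow> nat" where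
  "counts_join i j C1 C2 p = (if p \<le> i then C1 p else j + C2 (p - i))"

lemma valid_counts_prefix:
  assumes "valid_counts m n C" "i \<le> m" "C i \<le> j"
  shows "valid_counts i j (counts_prefix i j C)"
proof -
  have "counts_prefix i j C p \<le> counts_prefix i j C (Suc p)" if "p \<le> i" for p
    using that assms valid_counts_mono[OF assms(1), of p "Suc p"]
    by (cases "p = i") (auto simp: counts_prefix_def)
  then show ?thesis using assms(1) by (simp add: valid_counts_def counts_prefix_def)
qed

lemma valid_counts_suffix:
  assumes "valid_counts m n C" "i \<le> m"
  shows "valid_counts (m - i) (n - j) (counts_suffix i j C)"
proof -
  have "C (p + i) \<le> C (Suc p + i)" if "p \<le> m - i" for p
    using valid_counts_mono[OF assms(1), of "p + i" "Suc p + i"] that assms(2) by simp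
  moreover have "C (Suc (m - i) + i) = n" using assms by (simp add: valid_counts_def)
  ultimately show ?thesis by (auto simp: valid_counts_def counts_suffix_def diff_le_mono)
qed

lemma valid_counts_join:
  assumes "valid_counts i j C1" "valid_counts (m - i) (n - j) C2" "i \<le> m" "j \<le> n"
  shows "valid_counts m n (counts_join i j C1 C2)"
proof -
  have "counts_join i j C1 C2 p \<le> counts_join i j C1 C2 (Suc p)" if "p \<le> m" for p
  proof (cases "p \<le> i")
    case True
    then show ?thesis
      using assms(1) valid_counts_mono[OF assms(1), of p "Suc p"]
      by (cases "p = i") (auto simp: counts_join_def valid_counts_def)
  next
    case False
    then show ?thesis
      using assms(2) that by (auto simp: counts_join_def valid_counts_def Suc_diff_le)
  qed
  then show ?thesis
    using assms by (auto simp: valid_counts_def counts_join_def Suc_diff_le)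
qed

lemma graft_chunks_Node:
  assumes "valid_counts m n C" "fsize U = m" "fsize V = n"
  shows "graft_chunks C V (Node U) = Node (graft_f (chunk C V) 0 U @ chunk C V (Suc m))"
    and "fsize (graft_f (chunk C V) 0 U @ chunk C V (Suc m)) = m + n"
proof -
  show eq: "graft_chunks C V (Node U) = Node (graft_f (chunk C V) 0 U @ chunk C V (Suc m))"
    using assms(2) by (simp add: graft_chunks_def)
  have "tsize (graft_chunks C V (Node U)) = Suc m + n"
    using tsize_graft_t[of "chunk C V" 0 "Node U"] graft_count_chunk[OF assms(1), of V "Suc m"] assms
    by (simp add: graft_chunks_def valid_counts_def)
  then show "fsize (graft_f (chunk C V) 0 U @ chunk C V (Suc m)) = m + n"
    unfolding eq by simp
qed

(* The cut after node i + j of the hash product falls into the block grafted at node i + 1 of u: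
   the first i + j nodes are the first i nodes of u with their blocks and the first j - C i nodes
   of that block. *)
context
  fixes m n i j :: nat and C :: "nat \<Rightarrow> nat" and U V :: "tree list"
  assumes valid: "valid_counts m n C" and U: "fsize U = m" and V: "fsize V = n"
    and i: "i \<le> m" and j: "C i \<le> j" "j \<le> C (Suc i)"
begin

private lemma j_le_n: "j \<le> n"
  using valid_counts_le[OF valid, of "Suc i"] i j by simp

private lemma cut_position:
  "i + graft_count (chunk C V) 0 i + (j - C i) = i + j"
  "j - C i \<le> fsize (chunk C V (0 + i + 1))"
  "i < fsize [Node U]"
  "graft_f (chunk C V) 0 [Node U] = [graft_chunks C V (Node U)]"
proof -
  have "C i \<le> C (Suc i)" "C (Suc i) \<le> n"
    using valid_counts_mono[OF valid, of i "Suc i"] valid_counts_le[OF valid, of "Suc i"] i by auto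
  then show "j - C i \<le> fsize (chunk C V (0 + i + 1))"
    using fsize_chunk[of C "Suc i" V] j V by simp
  show "i + graft_count (chunk C V) 0 i + (j - C i) = i + j"
    using graft_count_chunk[OF valid, of V i] V i j by simp
qed (use U i in \<open>simp_all add: graft_chunks_def\<close>)

lemma tint_graft_chunks_prefix:
  "tint (graft_chunks C V (Node U)) 1 (i + j) =
     graft_chunks (counts_prefix i j C) (ftake j V) (Node (ftake i U))"
proof -
  define g where "g = chunk C V"
  define W where "W = graft_f g 0 U @ g (Suc m)"
  have w: "graft_chunks C V (Node U) = Node W" and W: "fsize W = m + n"
    using graft_chunks_Node[OF valid U V] by (simp_all add: W_def g_def)
  have ij: "i + j < tsize (Node W)"
    using W i j_le_n by simp
  have "ftake (i + j) [Node W] = graft_f g 0 (ftake i [Node U]) @ ftake (j - C i) (g (Suc i))"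
    using ftake_graft_f[of i "[Node U]" "j - C i" g 0] cut_position unfolding w g_def by simp
  moreover have "ftake (i + j) [Node W] = ftake (i + j) W" by (rule ftake_Node_less[OF ij])
  moreover have "ftake i [Node U] = ftake i U" by (rule ftake_Node_less) (use U i in simp)
  ultimately have take: "ftake (i + j) W = graft_f g 0 (ftake i U) @ ftake (j - C i) (g (Suc i))"
    by simp
  have "graft_f (chunk (counts_prefix i j C) (ftake j V)) 0 (ftake i U) = graft_f g 0 (ftake i U)"
  proof (rule graft_f_cong, intro allI impI)
    fix p assume "0 < p \<and> p \<le> 0 + fsize (ftake i U)"
    then have "p \<le> i" "p - 1 \<le> i" "C p \<le> j"
      using U i j valid_counts_mono[OF valid, of p i] by (auto simp: fsize_ftake)
    then show "chunk (counts_prefix i j C) (ftake j V) p = g p"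
      by (simp add: chunk_def counts_prefix_def g_def ftake_ftake min_def)
  qed
  moreover have "chunk (counts_prefix i j C) (ftake j V) (Suc i) = ftake (j - C i) (g (Suc i))"
    using j by (simp add: chunk_def counts_prefix_def g_def ftake_ftake ftake_fdrop min_def)
  ultimately show ?thesis
    using tint_prefix[of "i + j" W] w W i j_le_n take U
    by (simp add: graft_chunks_def fsize_ftake)
qed

lemma tint_graft_chunks_suffix:
  "tint (graft_chunks C V (Node U)) (i + j + 1) (m + n) =
     graft_chunks (counts_suffix i j C) (fdrop j V) (Node (fdrop i U))"
proof -
  define g where "g = chunk C V"
  define g' where "g' = g(i + 1 := fdrop (j - C i) (g (i + 1)))"
  define W where "W = graft_f g 0 U @ g (Suc m)"
  have w: "graft_chunks C V (Node U) = Node W" and W: "fsize W = m + n"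
    using graft_chunks_Node[OF valid U V] by (simp_all add: W_def g_def)
  have ij: "i + j < tsize (Node W)"
    using W i j_le_n by simp
  have "fdrop (i + j) [Node W] = graft_f g' i (fdrop i [Node U])"
    using fdrop_graft_f[of i "[Node U]" "j - C i" g 0] cut_position unfolding w g_def g'_def by simp
  moreover have "fdrop (i + j) [Node W] = [Node (fdrop (i + j) W)]" by (rule fdrop_Node_less[OF ij])
  moreover have "fdrop i [Node U] = [Node (fdrop i U)]" by (rule fdrop_Node_less) (use U i in simp)
  ultimately have "Node (fdrop (i + j) W) = graft_t (\<lambda>p. g' (p + i)) 0 (Node (fdrop i U))"
    using graft_t_shift[of g' 0 i "Node (fdrop i U)"] by simp
  also have "\<dots> = graft_chunks (counts_suffix i j C) (fdrop j V) (Node (fdrop i U))"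
    unfolding graft_chunks_def
  proof (rule graft_t_cong, intro allI impI)
    fix p assume "0 < p \<and> p \<le> 0 + tsize (Node (fdrop i U))"
    then have p: "0 < p" "p + i \<le> Suc m" using U i by (auto simp: fsize_fdrop)
    show "g' (p + i) = chunk (counts_suffix i j C) (fdrop j V) p"
    proof (cases "p = 1")
      case True
      then show ?thesis
        using j by (simp add: g'_def g_def chunk_def counts_suffix_def fdrop_fdrop ftake_fdrop)
    next
      case False
      then have "Suc i \<le> p - 1 + i" "p - 1 + i \<le> Suc m" using p by simp_all
      then have "j \<le> C (p - 1 + i)" "C (p - 1 + i) \<le> C (p + i)"
        using valid_counts_mono[OF valid, of "Suc i" "p - 1 + i"]
          valid_counts_mono[OF valid, of "p - 1 + i" "p + i"] j p by simp_all
      moreover have "p + i - 1 = p - 1 + i" using p by simp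
      ultimately show ?thesis
        using False p by (simp add: g'_def g_def chunk_def counts_suffix_def ftake_fdrop fdrop_fdrop)
    qed
  qed
  finally show ?thesis using tint_suffix[of "i + j" W] w W i j_le_n by simp
qed

end

lemma valid_counts_cut_point:
  assumes "valid_counts m n C" "q \<le> m" "k \<le> q + C (Suc q)"
  shows "\<exists>i\<le>q. i + C i \<le> k \<and> k \<le> i + C (Suc i)"
  using assms(2,3)
proof (induction q)
  case 0
  then show ?case using assms(1) by (auto simp: valid_counts_def)
next
  case (Suc q)
  show ?case
  proof (cases "k \<le> q + C (Suc q)")
    case True
    then show ?thesis using Suc by (metis Suc_leD le_SucI)
  next
    case False
    then show ?thesis using Suc.prems by (intro exI[of _ "Suc q"]) auto
  qed
qed

lemma graft_chunks_split:
  assumes valid: "valid_counts m n C" and U: "fsize U = m" and V: "fsize V = n"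
    and k: "k \<le> m + n"
  obtains i j C1 C2 where "i \<le> m" "j \<le> n" "i + j = k"
    "valid_counts i j C1" "valid_counts (m - i) (n - j) C2"
    "tint (graft_chunks C V (Node U)) 1 k = graft_chunks C1 (ftake j V) (Node (ftake i U))"
    "tint (graft_chunks C V (Node U)) (k + 1) (m + n) =
       graft_chunks C2 (fdrop j V) (Node (fdrop i U))"
proof -
  obtain i where i: "i \<le> m" "i + C i \<le> k" "k \<le> i + C (Suc i)"
    using valid_counts_cut_point[OF valid, of m k] valid k by (auto simp: valid_counts_def)
  define j where "j = k - i"
  have j: "C i \<le> j" "j \<le> C (Suc i)" and ij: "i + j = k" using i by (auto simp: j_def)
  have "j \<le> n" using valid_counts_le[OF valid, of "Suc i"] i j by simp
  then show ?thesis
    using that[OF i(1) _ ij valid_counts_prefix[OF valid i(1) j(1)] valid_counts_suffix[OF valid i(1)]]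
      tint_graft_chunks_prefix[OF valid U V i(1) j] tint_graft_chunks_suffix[OF valid U V i(1) j]
    by (simp add: ij)
qed

lemma graft_chunks_join:
  assumes U: "fsize U = m" and V: "fsize V = n" and i: "i \<le> m" and j: "j \<le> n"
    and C1: "valid_counts i j C1" and C2: "valid_counts (m - i) (n - j) C2"
  obtains C where "valid_counts m n C"
    "graft_chunks C1 (ftake j V) (Node (ftake i U)) = tint (graft_chunks C V (Node U)) 1 (i + j)"
    "graft_chunks C2 (fdrop j V) (Node (fdrop i U)) =
       tint (graft_chunks C V (Node U)) (i + j + 1) (m + n)"
proof -
  define C where "C = counts_join i j C1 C2"
  have valid: "valid_counts m n C" unfolding C_def by (rule valid_counts_join[OF C1 C2 i j])
  have Ci: "C i \<le> j" "j \<le> C (Suc i)"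
    using valid_counts_le[OF C1, of i] by (simp_all add: C_def counts_join_def)
  have "graft_chunks (counts_prefix i j C) (ftake j V) (Node (ftake i U)) =
      graft_chunks C1 (ftake j V) (Node (ftake i U))"
    by (rule graft_chunks_cong[of _ i])
       (use U i C1 in \<open>auto simp: fsize_ftake C_def counts_prefix_def counts_join_def
                         valid_counts_def le_Suc_eq\<close>)
  moreover have "graft_chunks (counts_suffix i j C) (fdrop j V) (Node (fdrop i U)) =
      graft_chunks C2 (fdrop j V) (Node (fdrop i U))"
    by (rule graft_chunks_cong[of _ "m - i"])
       (use U i C2 in \<open>auto simp: fsize_fdrop C_def counts_suffix_def counts_join_def
                         valid_counts_def\<close>)
  ultimately show ?thesis
    using that[OF valid] tint_graft_chunks_prefix[OF valid U V i Ci]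
      tint_graft_chunks_suffix[OF valid U V i Ci] by simp
qed

lemma hashes_tint_prefix:
  assumes "i \<le> deg u" "j \<le> deg v"
  shows "hashes (tint u 1 i) (tint v 1 j) =
    {graft_chunks C (ftake j (children v)) (Node (ftake i (children u))) | C. valid_counts i j C}"
  using assms tint_prefix[of i "children u"] tint_prefix[of j "children v"]
  by (simp add: hashes_eq_graft_chunks fsize_ftake deg_eq_fsize_children)

lemma hashes_tint_suffix:
  assumes "i \<le> deg u" "j \<le> deg v"
  shows "hashes (tint u (i + 1) (deg u)) (tint v (j + 1) (deg v)) =
    {graft_chunks C (fdrop j (children v)) (Node (fdrop i (children u))) |
       C. valid_counts (deg u - i) (deg v - j) C}"
  using assms tint_suffix[of i "children u"] tint_suffix[of j "children v"]
  by (simp add: hashes_eq_graft_chunks fsize_fdrop deg_eq_fsize_children)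

lemma hashes_split:
  assumes w: "w \<in> hashes u v" and k: "k \<le> deg u + deg v"
  shows "\<exists>i \<le> deg u. \<exists>j \<le> deg v.
           \<exists>w1 \<in> hashes (tint u 1 i) (tint v 1 j).
           \<exists>w2 \<in> hashes (tint u (i + 1) (deg u)) (tint v (j + 1) (deg v)).
             (tint w 1 k, tint w (k + 1) (deg u + deg v)) = (w1, w2)"
proof -
  obtain C where C: "valid_counts (deg u) (deg v) C"
    and w: "w = graft_chunks C (children v) (Node (children u))"
    using w by (auto simp: hashes_eq_graft_chunks)
  obtain i j C1 C2 where ij: "i \<le> deg u" "j \<le> deg v" "i + j = k"
    and "valid_counts i j C1" "valid_counts (deg u - i) (deg v - j) C2"
    and "tint w 1 k = graft_chunks C1 (ftake j (children v)) (Node (ftake i (children u)))"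
    and "tint w (k + 1) (deg u + deg v) =
      graft_chunks C2 (fdrop j (children v)) (Node (fdrop i (children u)))"
    using graft_chunks_split[OF C deg_eq_fsize_children[symmetric] deg_eq_fsize_children[symmetric] k]
    unfolding w by metis
  then have "tint w 1 k \<in> hashes (tint u 1 i) (tint v 1 j)"
    and "tint w (k + 1) (deg u + deg v) \<in> hashes (tint u (i + 1) (deg u)) (tint v (j + 1) (deg v))"
    unfolding hashes_tint_prefix[OF ij(1,2)] hashes_tint_suffix[OF ij(1,2)] by auto
  then show ?thesis using ij by blast
qed

lemma hashes_join:
  assumes ij: "i \<le> deg u" "j \<le> deg v"
    and "w1 \<in> hashes (tint u 1 i) (tint v 1 j)"
    and "w2 \<in> hashes (tint u (i + 1) (deg u)) (tint v (j + 1) (deg v))"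
  shows "\<exists>w \<in> hashes u v. (w1, w2) = (tint w 1 (i + j), tint w (i + j + 1) (deg u + deg v))"
proof -
  obtain C1 C2 where "valid_counts i j C1" "valid_counts (deg u - i) (deg v - j) C2"
    and "w1 = graft_chunks C1 (ftake j (children v)) (Node (ftake i (children u)))"
    and "w2 = graft_chunks C2 (fdrop j (children v)) (Node (fdrop i (children u)))"
    using assms unfolding hashes_tint_prefix[OF ij] hashes_tint_suffix[OF ij] by auto
  then show ?thesis
    by (elim graft_chunks_join[OF deg_eq_fsize_children[symmetric] deg_eq_fsize_children[symmetric] ij])
       (auto simp: hashes_eq_graft_chunks)
qed

theorem lemma3p6:
  fixes u v :: tree
  defines "m \<equiv> deg u" and "n \<equiv> deg v"
  shows "(\<forall>w \<in> hashes u v. \<forall>k \<le> m + n. \<exists>i \<le> m. \<exists>j \<le> n.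
            \<exists>w1 \<in> hashes (tint u 1 i) (tint v 1 j).
            \<exists>w2 \<in> hashes (tint u (i+1) m) (tint v (j+1) n).
              (tint w 1 k, tint w (k+1) (m+n)) = (w1, w2))
       \<and> (\<forall>i \<le> m. \<forall>j \<le> n.
            \<forall>w1 \<in> hashes (tint u 1 i) (tint v 1 j).
            \<forall>w2 \<in> hashes (tint u (i+1) m) (tint v (j+1) n).
            \<exists>w \<in> hashes u v. (w1, w2) = (tint w 1 (i+j), tint w (i+j+1) (m+n)))"
  unfolding m_def n_def using hashes_split hashes_join by blast

end
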